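(* Let $R$ be an integral domain with field of fractions $F$, $A$ a unital $R$-algebra, $P$ a right $A$-module, and $N_1\subseteq N_2$ left $A$-modules with inclusion $\iota:N_1\to N_2$. Suppose that $A\otimes_RF$ is semisimple and that $N_2$ and $P\otimes_AN_1$ are free $R$-modules. Then $\mathrm{id}_P\otimes\iota:P\otimes_AN_1\to P\otimes_AN_2$ is injective. *)

theory Defs
  imports Main "HOL-Library.Poly_Mapping" "HOL-Computational_Algebra.Fraction_Field"
begin

(* Unital R-algebra structure on a ring 'a: a unital ring hom R -> centre(A). *)
definition central_alg :: "('r::comm_ring_1 \<Rightarrow> 'a::ring_1) \<Rightarrow> bool" where
  "central_alg alg \<longleftrightarrow> alg 1 = 1 \<and> (\<forall>r s. alg (r + s) = alg r + alg s)
     \<and> (\<forall>r s. alg (r * s) = alg r * alg s) \<and> (\<forall>r a. alg r * a = a * alg r)"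

definition right_module :: "('p::ab_group_add \<Rightarrow> 'a::ring_1 \<Rightarrow> 'p) \<Rightarrow> bool" where
  "right_module pa \<longleftrightarrow> (\<forall>x y a. pa (x + y) a = pa x a + pa y a)
     \<and> (\<forall>x a b. pa x (a + b) = pa x a + pa x b)
     \<and> (\<forall>x a b. pa x (a * b) = pa (pa x a) b) \<and> (\<forall>x. pa x 1 = x)"

definition left_module :: "('a::ring_1 \<Rightarrow> 'n::ab_group_add \<Rightarrow> 'n) \<Rightarrow> bool" where
  "left_module na \<longleftrightarrow> (\<forall>x y a. na a (x + y) = na a x + na a y)
     \<and> (\<forall>x a b. na (a + b) x = na a x + na b x)
     \<and> (\<forall>x a b. na (a * b) x = na a (na b x)) \<and> (\<forall>x. na 1 x = x)"

definition left_submodule :: "('a::ring_1 \<Rightarrow> 'n::ab_group_add \<Rightarrow> 'n) \<Rightarrow> 'n set \<Rightarrow> bool" where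
  "left_submodule na N \<longleftrightarrow> 0 \<in> N \<and> (\<forall>x\<in>N. \<forall>y\<in>N. x + y \<in> N)
     \<and> (\<forall>x\<in>N. - x \<in> N) \<and> (\<forall>a. \<forall>x\<in>N. na a x \<in> N)"

(* Tensor product P \<otimes>_B N (P right B-module via ra, N \<subseteq> a left B-module via la):
   formal Z-linear combinations of pairs (p,n) with n \<in> N, modulo the subgroup
   generated by the bilinearity and balancing relations. *)
inductive_set tens_rel :: "('p::ab_group_add \<Rightarrow> 'b \<Rightarrow> 'p) \<Rightarrow> ('b \<Rightarrow> 'n::ab_group_add \<Rightarrow> 'n)
    \<Rightarrow> 'n set \<Rightarrow> (('p \<times> 'n) \<Rightarrow>\<^sub>0 int) set"
  for ra la N where
  rel_add_l: "n \<in> N \<Longrightarrow> Poly_Mapping.single (p + p', n) 1 - Poly_Mapping.single (p, n) 1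
                - Poly_Mapping.single (p', n) 1 \<in> tens_rel ra la N"
| rel_add_r: "n \<in> N \<Longrightarrow> n' \<in> N \<Longrightarrow> Poly_Mapping.single (p, n + n') 1
                - Poly_Mapping.single (p, n) 1 - Poly_Mapping.single (p, n') 1 \<in> tens_rel ra la N"
| rel_bal: "n \<in> N \<Longrightarrow> Poly_Mapping.single (ra p b, n) 1 - Poly_Mapping.single (p, la b n) 1
                \<in> tens_rel ra la N"
| rel_zero: "0 \<in> tens_rel ra la N"
| rel_plus: "x \<in> tens_rel ra la N \<Longrightarrow> y \<in> tens_rel ra la N \<Longrightarrow> x + y \<in> tens_rel ra la N"
| rel_neg: "x \<in> tens_rel ra la N \<Longrightarrow> - x \<in> tens_rel ra la N"

definition tens_sums :: "'n set \<Rightarrow> (('p \<times> 'n) \<Rightarrow>\<^sub>0 int) set" where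
  "tens_sums N = {x. Poly_Mapping.keys x \<subseteq> UNIV \<times> N}"

definition tensor :: "('p::ab_group_add \<Rightarrow> 'b \<Rightarrow> 'p) \<Rightarrow> ('b \<Rightarrow> 'n::ab_group_add \<Rightarrow> 'n)
    \<Rightarrow> 'n set \<Rightarrow> (('p \<times> 'n) \<Rightarrow>\<^sub>0 int) set set" where
  "tensor ra la N = (\<lambda>x. (+) x ` tens_rel ra la N) ` tens_sums N"

(* id_P \<otimes> inclusion: sends the class of x in P \<otimes> N1 to the class of x in P \<otimes> N2 *)
definition tensor_incl :: "('p::ab_group_add \<Rightarrow> 'b \<Rightarrow> 'p) \<Rightarrow> ('b \<Rightarrow> 'n::ab_group_add \<Rightarrow> 'n)
    \<Rightarrow> 'n set \<Rightarrow> (('p \<times> 'n) \<Rightarrow>\<^sub>0 int) set \<Rightarrow> (('p \<times> 'n) \<Rightarrow>\<^sub>0 int) set" where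
  "tensor_incl ra la N2 C = (\<Union>y\<in>C. (+) y ` tens_rel ra la N2)"

definition scal_l :: "('p \<Rightarrow> 'b \<Rightarrow> 'p) \<Rightarrow> 'b \<Rightarrow> (('p \<times> 'n) \<Rightarrow>\<^sub>0 int) \<Rightarrow> (('p \<times> 'n) \<Rightarrow>\<^sub>0 int)" where
  "scal_l ra b x = (\<Sum>k\<in>Poly_Mapping.keys x. Poly_Mapping.single (ra (fst k) b, snd k) (Poly_Mapping.lookup x k))"

(* M/K is a free R-module (R acting by smult on M, preserving K):
   there is a set B \<subseteq> M whose classes form a basis of M/K. *)
definition free_quot :: "('r::comm_ring_1 \<Rightarrow> 'm::ab_group_add \<Rightarrow> 'm) \<Rightarrow> 'm set \<Rightarrow> 'm set \<Rightarrow> bool" where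
  "free_quot smult M K \<longleftrightarrow> (\<exists>B \<subseteq> M.
     (\<forall>x\<in>M. \<exists>c. finite {b\<in>B. c b \<noteq> 0} \<and> x - (\<Sum>b\<in>{b\<in>B. c b \<noteq> 0}. smult (c b) b) \<in> K) \<and>
     (\<forall>c. finite {b\<in>B. c b \<noteq> 0} \<longrightarrow> (\<Sum>b\<in>{b\<in>B. c b \<noteq> 0}. smult (c b) b) \<in> K
          \<longrightarrow> (\<forall>b\<in>B. c b = 0)))"

definition tmult :: "(('a::ring_1 \<times> 'f::field) \<Rightarrow>\<^sub>0 int) \<Rightarrow> (('a \<times> 'f) \<Rightarrow>\<^sub>0 int) \<Rightarrow> (('a \<times> 'f) \<Rightarrow>\<^sub>0 int)" where
  "tmult x y = (\<Sum>k\<in>Poly_Mapping.keys x. \<Sum>l\<in>Poly_Mapping.keys y.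
      Poly_Mapping.single (fst k * fst l, snd k * snd l) (Poly_Mapping.lookup x k * Poly_Mapping.lookup y l))"

(* left ideals of the quotient ring M/K, represented by their preimages L with K \<subseteq> L \<subseteq> M *)
definition quot_left_ideal :: "('m::ab_group_add \<Rightarrow> 'm \<Rightarrow> 'm) \<Rightarrow> 'm set \<Rightarrow> 'm set \<Rightarrow> 'm set \<Rightarrow> bool" where
  "quot_left_ideal mult M K L \<longleftrightarrow> K \<subseteq> L \<and> L \<subseteq> M \<and> (\<forall>x\<in>L. \<forall>y\<in>L. x + y \<in> L)
     \<and> (\<forall>x\<in>L. - x \<in> L) \<and> (\<forall>x\<in>M. \<forall>y\<in>L. mult x y \<in> L)"

(* the ring M/K is semisimple: every left ideal is a direct summand of the regular module *)
definition semisimple_quot :: "('m::ab_group_add \<Rightarrow> 'm \<Rightarrow> 'm) \<Rightarrow> 'm set \<Rightarrow> 'm set \<Rightarrow> bool" where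
  "semisimple_quot mult M K \<longleftrightarrow> (\<forall>L. quot_left_ideal mult M K L \<longrightarrow>
     (\<exists>L'. quot_left_ideal mult M K L' \<and> L \<inter> L' = K \<and> (\<forall>x\<in>M. \<exists>y\<in>L. \<exists>z\<in>L'. x = y + z)))"

definition base_change_semisimple :: "('r::idom \<Rightarrow> 'a::ring_1) \<Rightarrow> bool" where
  "base_change_semisimple alg \<longleftrightarrow>
     semisimple_quot (tmult :: (('a \<times> 'r fract) \<Rightarrow>\<^sub>0 int) \<Rightarrow> _) UNIV
       (tens_rel (\<lambda>a r. a * alg r) (\<lambda>r f. Fract r 1 * f) UNIV)"

end

theory Submission
  imports Defs "HOL-Library.Function_Algebras"
begin

(* An element of P \<otimes>_A N is the class of a formal sum of pairs (p, n) modulo the relation subgroup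
   tens_rel.  Injectivity therefore reduces to: a formal sum z supported on P \<times> N1 that is a
   relation over N2 is already a relation over N1 (inj_on_tensor_incl), which relation_restriction proves:
   (1) z is a relation over the A-submodule A\<cdot>ts generated by finitely many ts in N2.
   (2) Choosing an R-basis B of N2 embeds N2 into F^(B), which becomes a module over A \<otimes> F,
       realised as formal sums over A \<times> F modulo bc_rel.  The A\<otimes>F-module spanned by ts is a
       quotient of the free module (A\<otimes>F)^k, and the F-saturation of N1 is a submodule of it.
       Semisimplicity splits this submodule off (semisimple_vec_retraction); clearing denominators
       yields r \<noteq> 0 and an A-linear map \<phi> : A\<cdot>ts \<rightarrow> N1 that is multiplication by r on N1
       (scaled_retraction).
   (3) Pushing z forward along id \<times> \<phi> gives a relation over N1 congruent to r\<cdot>z (balancing).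
   (4) Free R-modules are torsion free, so z is a relation over N1 (free_quot_torsion_free). *)


section \<open>Formal sums and the relation subgroup\<close>

lemma poly_mapping_sum_singles:
  "(x::'k \<Rightarrow>\<^sub>0 'b::comm_monoid_add) = (\<Sum>k\<in>Poly_Mapping.keys x. Poly_Mapping.single k (Poly_Mapping.lookup x k))"
  by (rule poly_mapping_eqI) (auto simp: lookup_sum lookup_single when_def in_keys_iff)

(* Pushforward of formal sums along a map of the index set.  Scalar multiplication on the left
   factor and id \<otimes> \<phi> are both pushforwards. *)
definition pushfwd :: "('k \<Rightarrow> 'l) \<Rightarrow> ('k \<Rightarrow>\<^sub>0 int) \<Rightarrow> ('l \<Rightarrow>\<^sub>0 int)" where
  "pushfwd h x = (\<Sum>k\<in>Poly_Mapping.keys x. Poly_Mapping.single (h k) (Poly_Mapping.lookup x k))"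

lemma pushfwd_expand:
  "finite X \<Longrightarrow> Poly_Mapping.keys x \<subseteq> X \<Longrightarrow>
     pushfwd h x = (\<Sum>k\<in>X. Poly_Mapping.single (h k) (Poly_Mapping.lookup x k))"
  unfolding pushfwd_def by (rule sum.mono_neutral_left) (auto simp: in_keys_iff)

lemma pushfwd_add: "pushfwd h (x + y) = pushfwd h x + pushfwd h y"
proof -
  let ?X = "Poly_Mapping.keys x \<union> Poly_Mapping.keys y"
  have "Poly_Mapping.keys (x + y) \<subseteq> ?X" by (rule keys_add)
  then show ?thesis by (simp add: pushfwd_expand[where X="?X"] lookup_add single_add sum.distrib)
qed

lemma pushfwd_zero [simp]: "pushfwd h 0 = 0"
  by (simp add: pushfwd_def)

lemma pushfwd_minus: "pushfwd h (- x) = - pushfwd h x"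
  by (metis add_eq_0_iff pushfwd_add pushfwd_zero neg_eq_iff_add_eq_0)

lemma pushfwd_diff: "pushfwd h (x - y) = pushfwd h x - pushfwd h y"
  by (metis diff_conv_add_uminus pushfwd_add pushfwd_minus)

lemma pushfwd_single: "pushfwd h (Poly_Mapping.single k c) = Poly_Mapping.single (h k) c"
  by (simp add: pushfwd_expand[where X="{k}"])

lemma pushfwd_sum: "pushfwd h (sum f A) = (\<Sum>a\<in>A. pushfwd h (f a))"
  by (induction A rule: infinite_finite_induct) (auto simp: pushfwd_add)

lemma pushfwd_cong: "(\<And>k. k \<in> Poly_Mapping.keys x \<Longrightarrow> h k = h' k) \<Longrightarrow> pushfwd h x = pushfwd h' x"
  by (simp add: pushfwd_def)

lemma pushfwd_pushfwd: "pushfwd h (pushfwd g x) = pushfwd (\<lambda>k. h (g k)) x"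
  by (simp add: pushfwd_def[of g] pushfwd_sum pushfwd_single) (simp add: pushfwd_def)

lemma scal_l_pushfwd: "scal_l ra b = pushfwd (\<lambda>k. (ra (fst k) b, snd k))"
  by (rule ext) (simp add: scal_l_def pushfwd_def)

lemma tens_rel_diff:
  "x \<in> tens_rel ra la N \<Longrightarrow> y \<in> tens_rel ra la N \<Longrightarrow> x - y \<in> tens_rel ra la N"
  by (metis diff_conv_add_uminus tens_rel.rel_plus tens_rel.rel_neg)

lemma tens_rel_sum:
  "(\<And>a. a \<in> A \<Longrightarrow> f a \<in> tens_rel ra la N) \<Longrightarrow> sum f A \<in> tens_rel ra la N"
  by (induction A rule: infinite_finite_induct) (auto intro: tens_rel.intros)

lemma tens_rel_cmul:
  assumes x: "x \<in> tens_rel ra la N"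
  shows "frag_cmul c x \<in> tens_rel ra la N"
proof -
  have nat_mult: "frag_cmul (int n) x \<in> tens_rel ra la N" for n
  proof (induction n)
    case 0
    then show ?case by (simp add: tens_rel.rel_zero)
  next
    case (Suc n)
    have "frag_cmul (int (Suc n)) x = x + frag_cmul (int n) x"
      by (simp add: frag_cmul_distrib)
    then show ?case using Suc x by (simp add: tens_rel.rel_plus)
  qed
  show ?thesis
  proof (cases c rule: int_cases)
    case (nonneg n)
    then show ?thesis using nat_mult by simp
  next
    case (neg n)
    then show ?thesis using tens_rel.rel_neg[OF nat_mult[of "Suc n"]] by simp
  qed
qed

lemma frag_cmul_single: "frag_cmul c (Poly_Mapping.single m d) = Poly_Mapping.single m (c * d)"
  by (rule poly_mapping_eqI) (simp add: lookup_single when_def)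

lemma tens_rel_single_diff:
  assumes "Poly_Mapping.single a 1 - Poly_Mapping.single b 1 \<in> tens_rel ra la N"
  shows "Poly_Mapping.single a c - Poly_Mapping.single b c \<in> tens_rel ra la N"
proof -
  have "frag_cmul c (Poly_Mapping.single a 1 - Poly_Mapping.single b 1)
      = Poly_Mapping.single a c - Poly_Mapping.single b c"
    by (rule poly_mapping_eqI) (simp add: lookup_minus lookup_single when_def)
  then show ?thesis using tens_rel_cmul[OF assms, of c] by simp
qed

lemma tens_rel_mono: "x \<in> tens_rel ra la N \<Longrightarrow> N \<subseteq> N' \<Longrightarrow> x \<in> tens_rel ra la N'"
  by (induction rule: tens_rel.induct) (auto intro: tens_rel.intros)


section \<open>Cosets of relations and injectivity of id \<otimes> \<iota>\<close>

lemma coset_eqI: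
  assumes "x - y \<in> tens_rel ra la N"
  shows "(+) x ` tens_rel ra la N = (+) y ` tens_rel ra la N"
proof (intro equalityI subsetI)
  fix w assume "w \<in> (+) x ` tens_rel ra la N"
  then obtain k where "k \<in> tens_rel ra la N" "w = x + k" by blast
  then have "w = y + ((x - y) + k)" "(x - y) + k \<in> tens_rel ra la N"
    using assms tens_rel.rel_plus by auto
  then show "w \<in> (+) y ` tens_rel ra la N" by blast
next
  fix w assume "w \<in> (+) y ` tens_rel ra la N"
  then obtain k where "k \<in> tens_rel ra la N" "w = y + k" by blast
  then have "w = x + (k - (x - y))" "k - (x - y) \<in> tens_rel ra la N"
    using assms tens_rel_diff by auto
  then show "w \<in> (+) x ` tens_rel ra la N" by blast
qed

lemma tensor_incl_coset:
  assumes "N1 \<subseteq> N2"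
  shows "tensor_incl pa na N2 ((+) x ` tens_rel pa na N1) = (+) x ` tens_rel pa na N2"
proof (intro equalityI subsetI)
  fix w assume "w \<in> tensor_incl pa na N2 ((+) x ` tens_rel pa na N1)"
  then obtain k1 k2 where k: "k1 \<in> tens_rel pa na N1" "k2 \<in> tens_rel pa na N2" "w = x + k1 + k2"
    unfolding tensor_incl_def by blast
  have "k1 + k2 \<in> tens_rel pa na N2"
    using k(1,2) assms by (auto intro: tens_rel.rel_plus tens_rel_mono)
  then show "w \<in> (+) x ` tens_rel pa na N2" using k(3) by (auto simp: add.assoc)
next
  fix w assume "w \<in> (+) x ` tens_rel pa na N2"
  moreover have "x + 0 \<in> (+) x ` tens_rel pa na N1" using tens_rel.rel_zero by blast
  ultimately show "w \<in> tensor_incl pa na N2 ((+) x ` tens_rel pa na N1)"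
    unfolding tensor_incl_def by force
qed

lemma inj_on_tensor_incl:
  assumes sub: "N1 \<subseteq> N2"
    and restrict: "\<And>z. z \<in> tens_sums N1 \<Longrightarrow> z \<in> tens_rel pa na N2 \<Longrightarrow> z \<in> tens_rel pa na N1"
  shows "inj_on (tensor_incl pa na N2) (tensor pa na N1)"
proof (rule inj_onI)
  fix C1 C2 assume "C1 \<in> tensor pa na N1" "C2 \<in> tensor pa na N1"
    and eq: "tensor_incl pa na N2 C1 = tensor_incl pa na N2 C2"
  then obtain x y where x: "x \<in> tens_sums N1" "C1 = (+) x ` tens_rel pa na N1"
    and y: "y \<in> tens_sums N1" "C2 = (+) y ` tens_rel pa na N1"
    unfolding tensor_def by blast
  have "(+) x ` tens_rel pa na N2 = (+) y ` tens_rel pa na N2"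
    using eq by (simp add: x y tensor_incl_coset[OF sub])
  moreover have "x + 0 \<in> (+) x ` tens_rel pa na N2" using tens_rel.rel_zero by blast
  ultimately obtain k where "k \<in> tens_rel pa na N2" "x = y + k" by auto
  then have "x - y \<in> tens_rel pa na N2" by simp
  moreover have "x - y \<in> tens_sums N1"
    using x(1) y(1) keys_diff[of x y] unfolding tens_sums_def by auto
  ultimately have "x - y \<in> tens_rel pa na N1" by (rule restrict[rotated])
  then show "C1 = C2" unfolding x(2) y(2) by (rule coset_eqI)
qed


section \<open>Scalars and torsion\<close>

lemma right_module_add: "right_module pa \<Longrightarrow> pa (x + y) a = pa x a + pa y a"
  and right_module_mult: "right_module pa \<Longrightarrow> pa x (a * b) = pa (pa x a) b"
  unfolding right_module_def by blast+

lemma tens_rel_scal_l: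
  assumes rm: "right_module pa" and cen: "central_alg alg" and x: "x \<in> tens_rel pa na N"
  shows "scal_l pa (alg r) x \<in> tens_rel pa na N"
  using x
proof (induction rule: tens_rel.induct)
  case (rel_add_l n p p')
  then show ?case
    by (simp add: scal_l_pushfwd pushfwd_diff pushfwd_single right_module_add[OF rm] tens_rel.rel_add_l)
next
  case (rel_add_r n n' p)
  then show ?case by (simp add: scal_l_pushfwd pushfwd_diff pushfwd_single tens_rel.rel_add_r)
next
  case (rel_bal n p b)
  have "pa (pa p b) (alg r) = pa (pa p (alg r)) b"
    using cen unfolding central_alg_def by (metis right_module_mult[OF rm])
  then show ?case using rel_bal tens_rel.rel_bal[of n N pa "pa p (alg r)" b na]
    by (simp add: scal_l_pushfwd pushfwd_diff pushfwd_single)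
next
  case rel_zero
  then show ?case by (simp add: scal_l_pushfwd tens_rel.rel_zero)
next
  case (rel_plus x y)
  then show ?case by (simp add: scal_l_pushfwd pushfwd_add tens_rel.rel_plus)
next
  case (rel_neg x)
  then show ?case by (simp add: scal_l_pushfwd pushfwd_minus tens_rel.rel_neg)
qed

lemma scal_l_balanced:
  assumes "z \<in> tens_sums N1"
  shows "scal_l pa (alg r) z - pushfwd (\<lambda>k. (fst k, na (alg r) (snd k))) z \<in> tens_rel pa na N1"
proof -
  have "scal_l pa (alg r) z - pushfwd (\<lambda>k. (fst k, na (alg r) (snd k))) z =
      (\<Sum>k\<in>Poly_Mapping.keys z. Poly_Mapping.single (pa (fst k) (alg r), snd k) (Poly_Mapping.lookup z k)
         - Poly_Mapping.single (fst k, na (alg r) (snd k)) (Poly_Mapping.lookup z k))"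
    by (simp add: scal_l_pushfwd pushfwd_def sum_subtractf)
  also have "\<dots> \<in> tens_rel pa na N1"
    using assms unfolding tens_sums_def
    by (auto intro!: tens_rel_sum tens_rel_single_diff tens_rel.rel_bal)
  finally show ?thesis .
qed

lemma free_quot_torsion_free:
  fixes smult :: "'r::idom \<Rightarrow> 'm::ab_group_add \<Rightarrow> 'm"
  assumes free: "free_quot smult M K" and z: "z \<in> M" and r: "r \<noteq> 0" and zr: "smult r z \<in> K"
    and K_diff: "\<And>x y. x \<in> K \<Longrightarrow> y \<in> K \<Longrightarrow> x - y \<in> K"
    and smult_K: "\<And>x. x \<in> K \<Longrightarrow> smult r x \<in> K"
    and smult_add: "\<And>x y. smult r (x + y) = smult r x + smult r y"
    and smult_smult: "\<And>s x. smult r (smult s x) = smult (s * r) x"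
  shows "z \<in> K"
proof -
  have smult_zero: "smult r 0 = 0" using smult_add[of 0 0] by simp
  have smult_diff: "smult r (x - y) = smult r x - smult r y" for x y
    using smult_add[of "x - y" y] by (simp add: eq_diff_eq)
  have smult_sum: "smult r (sum f A) = (\<Sum>a\<in>A. smult r (f a))" for f and A :: "'m set"
    by (induction A rule: infinite_finite_induct) (auto simp: smult_zero smult_add)
  obtain BB where
    span: "\<forall>x\<in>M. \<exists>c. finite {b\<in>BB. c b \<noteq> 0} \<and> x - (\<Sum>b\<in>{b\<in>BB. c b \<noteq> 0}. smult (c b) b) \<in> K"
    and indep: "\<forall>c. finite {b\<in>BB. c b \<noteq> 0} \<longrightarrow> (\<Sum>b\<in>{b\<in>BB. c b \<noteq> 0}. smult (c b) b) \<in> K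
                  \<longrightarrow> (\<forall>b\<in>BB. c b = 0)"
    using free unfolding free_quot_def by blast
  obtain c where fin: "finite {b\<in>BB. c b \<noteq> 0}"
    and c: "z - (\<Sum>b\<in>{b\<in>BB. c b \<noteq> 0}. smult (c b) b) \<in> K"
    using span z by blast
  have supp_eq: "{b\<in>BB. c b * r \<noteq> 0} = {b\<in>BB. c b \<noteq> 0}" using r by auto
  have "smult r z - (\<Sum>b\<in>{b\<in>BB. c b \<noteq> 0}. smult (c b * r) b) \<in> K"
    using smult_K[OF c] by (simp add: smult_diff smult_sum smult_smult)
  from K_diff[OF zr this] have S: "(\<Sum>b\<in>{b\<in>BB. c b * r \<noteq> 0}. smult (c b * r) b) \<in> K"
    by (simp only: supp_eq diff_diff_eq2 add_diff_cancel_left')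
  have fin': "finite {b\<in>BB. c b * r \<noteq> 0}" using fin by (simp only: supp_eq)
  have "c b = 0" if "b \<in> BB" for b
    using indep[rule_format, OF fin' S that] r by simp
  then have "{b\<in>BB. c b \<noteq> 0} = {}" by auto
  with c show ?thesis by (simp only: sum.empty diff_zero)
qed

lemma tensor_torsion_free:
  fixes alg :: "'r::idom \<Rightarrow> 'a::ring_1" and pa :: "'p::ab_group_add \<Rightarrow> 'a \<Rightarrow> 'p" and N1 :: "'n::ab_group_add set"
  assumes free: "free_quot (\<lambda>r x. scal_l pa (alg r) x) (tens_sums N1) (tens_rel pa na N1)"
    and rm: "right_module pa" and cen: "central_alg alg" and r: "r \<noteq> 0"
    and z: "z \<in> tens_sums N1" and zr: "scal_l pa (alg r) z \<in> tens_rel pa na N1"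
  shows "z \<in> tens_rel pa na N1"
proof (rule free_quot_torsion_free[OF free z r zr])
  have alg_mult: "alg (s * r) = alg s * alg r" for s using cen unfolding central_alg_def by blast
  show "scal_l pa (alg r) (scal_l pa (alg s) x) = scal_l pa (alg (s * r)) x"
    for s and x :: "('p \<times> 'n) \<Rightarrow>\<^sub>0 int"
    by (simp add: scal_l_pushfwd pushfwd_pushfwd alg_mult right_module_mult[OF rm])
next
  show "scal_l pa (alg r) x \<in> tens_rel pa na N1" if "x \<in> tens_rel pa na N1" for x
    using tens_rel_scal_l[OF rm cen that] .
  show "scal_l pa (alg r) (x + y) = scal_l pa (alg r) x + scal_l pa (alg r) y"
    for x y :: "('p \<times> 'n) \<Rightarrow>\<^sub>0 int"
    by (simp add: scal_l_pushfwd pushfwd_add)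
qed (rule tens_rel_diff)


section \<open>The algebra A \<otimes>_R F as a quotient of formal sums over A \<times> F\<close>

(* Formal sums over A \<times> F, multiplied by (a, f)(a', f') = (a a', f f'), form an associative unital
   ring; A \<otimes>_R F is its quotient by the relation subgroup bc_rel, a left ideal. *)
lemma tmult_expand:
  assumes "finite X" "Poly_Mapping.keys x \<subseteq> X" "finite Y" "Poly_Mapping.keys y \<subseteq> Y"
  shows "tmult x y = (\<Sum>k\<in>X. \<Sum>l\<in>Y. Poly_Mapping.single (fst k * fst l, snd k * snd l)
                              (Poly_Mapping.lookup x k * Poly_Mapping.lookup y l))"
proof -
  have "tmult x y = (\<Sum>k\<in>X. \<Sum>l\<in>Poly_Mapping.keys y. Poly_Mapping.single (fst k * fst l, snd k * snd l)
                              (Poly_Mapping.lookup x k * Poly_Mapping.lookup y l))"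
    unfolding tmult_def using assms by (intro sum.mono_neutral_left) (auto simp: in_keys_iff)
  also have "\<dots> = (\<Sum>k\<in>X. \<Sum>l\<in>Y. Poly_Mapping.single (fst k * fst l, snd k * snd l)
                              (Poly_Mapping.lookup x k * Poly_Mapping.lookup y l))"
    using assms by (intro sum.cong refl sum.mono_neutral_left) (auto simp: in_keys_iff)
  finally show ?thesis .
qed

lemma tmult_add_left: "tmult (x + x') y = tmult x y + tmult x' y"
proof -
  let ?X = "Poly_Mapping.keys x \<union> Poly_Mapping.keys x'"
  have "Poly_Mapping.keys (x + x') \<subseteq> ?X" by (rule keys_add)
  then show ?thesis
    by (subst (1 2 3) tmult_expand[where X="?X" and Y="Poly_Mapping.keys y"])
       (auto simp: lookup_add distrib_right single_add sum.distrib)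
qed

lemma tmult_add_right: "tmult x (y + y') = tmult x y + tmult x y'"
proof -
  let ?Y = "Poly_Mapping.keys y \<union> Poly_Mapping.keys y'"
  have "Poly_Mapping.keys (y + y') \<subseteq> ?Y" by (rule keys_add)
  then show ?thesis
    by (subst (1 2 3) tmult_expand[where Y="?Y" and X="Poly_Mapping.keys x"])
       (auto simp: lookup_add distrib_left single_add sum.distrib)
qed

lemma tmult_zero_left [simp]: "tmult 0 y = 0"
  and tmult_zero_right [simp]: "tmult x 0 = 0"
  by (simp_all add: tmult_def)

lemma tmult_minus_right: "tmult x (- y) = - tmult x y"
  by (metis add_eq_0_iff tmult_add_right tmult_zero_right neg_eq_iff_add_eq_0)

lemma tmult_diff_right: "tmult x (y - y') = tmult x y - tmult x y'"
  by (metis diff_conv_add_uminus tmult_add_right tmult_minus_right)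

lemma tmult_sum_left: "tmult (sum f A) y = (\<Sum>a\<in>A. tmult (f a) y)"
  by (induction A rule: infinite_finite_induct) (auto simp: tmult_add_left)

lemma tmult_sum_right: "tmult y (sum f A) = (\<Sum>a\<in>A. tmult y (f a))"
  by (induction A rule: infinite_finite_induct) (auto simp: tmult_add_right)

lemma tmult_single:
  "tmult (Poly_Mapping.single k c) (Poly_Mapping.single l d)
     = Poly_Mapping.single (fst k * fst l, snd k * snd l) (c * d)"
  by (subst tmult_expand[where X="{k}" and Y="{l}"]) auto

lemma tmult_assoc: "tmult (tmult x y) z = tmult x (tmult y z)"
proof -
  let ?dec = "\<lambda>x. \<Sum>k\<in>Poly_Mapping.keys x. Poly_Mapping.single k (Poly_Mapping.lookup x k)"
  have "tmult (tmult (?dec x) (?dec y)) (?dec z) = tmult (?dec x) (tmult (?dec y) (?dec z))"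
    by (simp add: tmult_sum_left tmult_sum_right tmult_single mult.assoc)
  then show ?thesis by (simp flip: poly_mapping_sum_singles)
qed

abbreviation tunit :: "('a::ring_1 \<times> 'f::field) \<Rightarrow>\<^sub>0 int" where
  "tunit \<equiv> Poly_Mapping.single (1, 1) 1"

lemma tmult_tunit_right [simp]: "tmult x tunit = x"
proof -
  have "tmult (\<Sum>k\<in>Poly_Mapping.keys x. Poly_Mapping.single k (Poly_Mapping.lookup x k)) tunit
      = (\<Sum>k\<in>Poly_Mapping.keys x. Poly_Mapping.single k (Poly_Mapping.lookup x k))"
    by (simp add: tmult_sum_left tmult_single)
  then show ?thesis by (simp flip: poly_mapping_sum_singles)
qed

lemma tmult_single_cmul:
  "tmult (Poly_Mapping.single k c) y = frag_cmul c (tmult (Poly_Mapping.single k 1) y)"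
  by (simp add: tmult_expand[where X="{k}" and Y="Poly_Mapping.keys y"] frag_cmul_sum frag_cmul_single)

abbreviation bc_rel :: "('r::idom \<Rightarrow> 'a::ring_1) \<Rightarrow> (('a \<times> 'r fract) \<Rightarrow>\<^sub>0 int) set" where
  "bc_rel alg \<equiv> tens_rel (\<lambda>a r. a * alg r) (\<lambda>r f. Fract r 1 * f) UNIV"

lemma bc_rel_single_mult:
  assumes "g \<in> bc_rel alg" "central_alg alg"
  shows "tmult (Poly_Mapping.single k 1) g \<in> bc_rel alg"
  using assms(1)
proof (induction rule: tens_rel.induct)
  case (rel_add_l n p p')
  then show ?case
    using tens_rel.rel_add_l[where n="snd k * n" and N=UNIV and p="fst k * p" and p'="fst k * p'"]
    by (simp add: tmult_diff_right tmult_single distrib_left)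
next
  case (rel_add_r n n' p)
  then show ?case
    using tens_rel.rel_add_r[where n="snd k * n" and N=UNIV and n'="snd k * n'" and p="fst k * p"]
    by (simp add: tmult_diff_right tmult_single distrib_left)
next
  case (rel_bal n p b)
  then show ?case
    using tens_rel.rel_bal[where n="snd k * n" and N=UNIV and p="fst k * p" and b=b
        and ra="\<lambda>a r. a * alg r" and la="\<lambda>r f. Fract r 1 * f"]
    by (simp add: tmult_diff_right tmult_single ac_simps)
next
  case rel_zero
  then show ?case by (simp add: tens_rel.rel_zero)
next
  case (rel_plus x y)
  then show ?case by (simp add: tmult_add_right tens_rel.rel_plus)
next
  case (rel_neg x)
  then show ?case by (simp add: tmult_minus_right tens_rel.rel_neg)
qed

lemma bc_rel_left_ideal:
  assumes "g \<in> bc_rel alg" "central_alg alg"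
  shows "tmult x g \<in> bc_rel alg"
proof -
  have "tmult x g = tmult (\<Sum>k\<in>Poly_Mapping.keys x. Poly_Mapping.single k (Poly_Mapping.lookup x k)) g"
    by (simp flip: poly_mapping_sum_singles)
  also have "\<dots> = (\<Sum>k\<in>Poly_Mapping.keys x. tmult (Poly_Mapping.single k (Poly_Mapping.lookup x k)) g)"
    by (rule tmult_sum_left)
  also have "\<dots> \<in> bc_rel alg"
    by (rule tens_rel_sum, subst tmult_single_cmul, rule tens_rel_cmul, rule bc_rel_single_mult[OF assms])
  finally show ?thesis .
qed

lemma semisimple_right_unit:
  assumes ss: "base_change_semisimple alg" and I: "quot_left_ideal tmult UNIV (bc_rel alg) I"
  obtains e where "e \<in> I" "\<And>x. x \<in> I \<Longrightarrow> x - tmult x e \<in> bc_rel alg"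
proof -
  obtain L where L: "quot_left_ideal tmult UNIV (bc_rel alg) L" "I \<inter> L = bc_rel alg"
    and decomp: "\<forall>x\<in>UNIV. \<exists>y\<in>I. \<exists>z\<in>L. x = y + z"
  proof -
    have "semisimple_quot tmult UNIV (bc_rel alg)"
      using ss unfolding base_change_semisimple_def .
    then show ?thesis using I that unfolding semisimple_quot_def by blast
  qed
  obtain e e' where e: "e \<in> I" "e' \<in> L" "tunit = e + e'" using decomp by blast
  have "x - tmult x e \<in> bc_rel alg" if x: "x \<in> I" for x
  proof -
    have "x = tmult x (e + e')" by (simp flip: e(3))
    also have "\<dots> = tmult x e + tmult x e'" by (rule tmult_add_right)
    finally have "x = tmult x e + tmult x e'" .
    then have eq: "x - tmult x e = tmult x e'" by (simp add: algebra_simps)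
    have "tmult x e' \<in> L" using L(1) e(2) unfolding quot_left_ideal_def by auto
    moreover have "x - tmult x e \<in> I"
    proof -
      have "tmult x e \<in> I" using I e(1) unfolding quot_left_ideal_def by blast
      then have "x + - tmult x e \<in> I" using I x unfolding quot_left_ideal_def by blast
      then show ?thesis by simp
    qed
    ultimately show ?thesis using eq L(2) by auto
  qed
  with e(1) show ?thesis using that by blast
qed


section \<open>Submodules of free A \<otimes> F-modules are direct summands\<close>

(* Vectors of length k over the formal sums, i.e. representatives of (A \<otimes> F)^k, with the
   coordinatewise left action and the relation subgroup (bc_rel)^k. *)
definition fvec :: "nat \<Rightarrow> (nat \<Rightarrow> ('a \<times> 'f) \<Rightarrow>\<^sub>0 int) set" where
  "fvec k = {v. \<forall>i\<ge>k. v i = 0}"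

definition vsmult :: "(('a::ring_1 \<times> 'f::field) \<Rightarrow>\<^sub>0 int) \<Rightarrow> (nat \<Rightarrow> ('a \<times> 'f) \<Rightarrow>\<^sub>0 int)
    \<Rightarrow> (nat \<Rightarrow> ('a \<times> 'f) \<Rightarrow>\<^sub>0 int)" where
  "vsmult x v = (\<lambda>i. tmult x (v i))"

definition vec_rel :: "('r::idom \<Rightarrow> 'a::ring_1) \<Rightarrow> (nat \<Rightarrow> ('a \<times> 'r fract) \<Rightarrow>\<^sub>0 int) set" where
  "vec_rel alg = {v. \<forall>i. v i \<in> bc_rel alg}"

definition vec_submodule :: "(nat \<Rightarrow> ('a::ring_1 \<times> 'f::field) \<Rightarrow>\<^sub>0 int) set \<Rightarrow> bool" where
  "vec_submodule W \<longleftrightarrow> (\<forall>v\<in>W. \<forall>w\<in>W. v + w \<in> W) \<and> (\<forall>v\<in>W. - v \<in> W) \<and> (\<forall>x. \<forall>v\<in>W. vsmult x v \<in> W)"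

definition vec_linear :: "nat \<Rightarrow> ((nat \<Rightarrow> ('a::ring_1 \<times> 'f::field) \<Rightarrow>\<^sub>0 int) \<Rightarrow> (nat \<Rightarrow> ('a \<times> 'f) \<Rightarrow>\<^sub>0 int))
    \<Rightarrow> bool" where
  "vec_linear k q \<longleftrightarrow> (\<forall>v\<in>fvec k. \<forall>w\<in>fvec k. q (v + w) = q v + q w)
     \<and> (\<forall>x. \<forall>v\<in>fvec k. q (vsmult x v) = vsmult x (q v))"

lemma vsmult_apply: "vsmult x v i = tmult x (v i)"
  by (simp add: vsmult_def)

lemma vsmult_add: "vsmult x (v + w) = vsmult x v + vsmult x w"
  by (rule ext) (simp add: tmult_add_right vsmult_apply)

lemma vsmult_add_left: "vsmult (x + y) v = vsmult x v + vsmult y v"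
  by (rule ext) (simp add: tmult_add_left vsmult_apply)

lemma vsmult_vsmult: "vsmult x (vsmult y v) = vsmult (tmult x y) v"
  by (rule ext) (simp add: tmult_assoc vsmult_apply)

lemma vec_rel_add: "v \<in> vec_rel alg \<Longrightarrow> w \<in> vec_rel alg \<Longrightarrow> v + w \<in> vec_rel alg"
  by (simp add: vec_rel_def tens_rel.rel_plus)

lemma fvec_zero: "0 \<in> fvec k"
  and fvec_add: "v \<in> fvec k \<Longrightarrow> w \<in> fvec k \<Longrightarrow> v + w \<in> fvec k"
  and fvec_minus: "v \<in> fvec k \<Longrightarrow> - v \<in> fvec k"
  and fvec_diff: "v \<in> fvec k \<Longrightarrow> w \<in> fvec k \<Longrightarrow> v - w \<in> fvec k"
  and fvec_vsmult: "v \<in> fvec k \<Longrightarrow> vsmult x v \<in> fvec k"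
  and fvec_Suc: "fvec k \<subseteq> fvec (Suc k)"
  by (auto simp: fvec_def vsmult_apply)

lemma vec_submodule_Int_fvec: "vec_submodule W \<Longrightarrow> vec_submodule (W \<inter> fvec k)"
  unfolding vec_submodule_def by (auto intro: fvec_add fvec_minus fvec_vsmult)

lemma vec_submodule_diff: "vec_submodule W \<Longrightarrow> v \<in> W \<Longrightarrow> w \<in> W \<Longrightarrow> v - w \<in> W"
  unfolding vec_submodule_def by (metis diff_conv_add_uminus)

lemma delta_vec_rel:
  assumes "c \<in> bc_rel alg"
  shows "(\<lambda>i. if i = k then c else 0) \<in> fvec (Suc k) \<inter> vec_rel alg"
  using assms by (auto simp: fvec_def vec_rel_def tens_rel.rel_zero)

lemma coord_left_ideal:
  assumes W: "vec_submodule W" and rel: "fvec (Suc k) \<inter> vec_rel alg \<subseteq> W"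
  shows "quot_left_ideal tmult UNIV (bc_rel alg) ((\<lambda>v. v k) ` W)"
  unfolding quot_left_ideal_def
proof (intro conjI ballI subsetI)
  fix c assume "c \<in> bc_rel alg"
  then have "(\<lambda>i. if i = k then c else 0) \<in> W" using delta_vec_rel rel by blast
  then show "c \<in> (\<lambda>v. v k) ` W" by (auto intro: image_eqI[where x="\<lambda>i. if i = k then c else 0"])
next
  fix x y assume "x \<in> (\<lambda>v. v k) ` W" "y \<in> (\<lambda>v. v k) ` W"
  then obtain v w where "v \<in> W" "w \<in> W" "x = v k" "y = w k" by auto
  then show "x + y \<in> (\<lambda>v. v k) ` W"
    using W unfolding vec_submodule_def by (auto intro: image_eqI[where x="v + w"])
next
  fix x assume "x \<in> (\<lambda>v. v k) ` W"
  then obtain v where "v \<in> W" "x = v k" by auto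
  then show "- x \<in> (\<lambda>v. v k) ` W"
    using W unfolding vec_submodule_def by (auto intro: image_eqI[where x="- v"])
next
  fix x y assume "y \<in> (\<lambda>v. v k) ` W"
  then obtain v where "v \<in> W" "y = v k" by auto
  then show "tmult x y \<in> (\<lambda>v. v k) ` W"
    using W unfolding vec_submodule_def by (auto simp: vsmult_apply intro: image_eqI[where x="vsmult x v"])
qed auto

(* Induction on k: split off
   the last coordinate using a right unit of the ideal of last coordinates. *)
lemma semisimple_vec_retraction:
  fixes alg :: "'r::idom \<Rightarrow> 'a::ring_1"
  assumes ss: "base_change_semisimple alg" and cen: "central_alg alg"
  shows "W \<subseteq> fvec k \<Longrightarrow> fvec k \<inter> vec_rel alg \<subseteq> W \<Longrightarrow> vec_submodule W \<Longrightarrow>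
    \<exists>q. (\<forall>v\<in>fvec k. q v \<in> W) \<and> (\<forall>w\<in>W. w - q w \<in> vec_rel alg) \<and> vec_linear k q"
proof (induction k arbitrary: W)
  case 0
  have "fvec 0 = {0}" by (auto simp: fvec_def)
  moreover have "0 \<in> vec_rel alg" by (simp add: vec_rel_def tens_rel.rel_zero)
  ultimately show ?case using "0.prems"
    by (intro exI[of _ "\<lambda>v. v"]) (auto simp: vec_rel_def vec_linear_def tens_rel.rel_zero)
next
  case (Suc k)
  note sub = Suc.prems(1) and rel = Suc.prems(2) and W = Suc.prems(3)
  obtain q1 where q1W: "\<And>v. v \<in> fvec k \<Longrightarrow> q1 v \<in> W \<inter> fvec k"
    and q1rel: "\<And>w. w \<in> W \<inter> fvec k \<Longrightarrow> w - q1 w \<in> vec_rel alg" and q1lin: "vec_linear k q1"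
    using Suc.IH[of "W \<inter> fvec k"] rel fvec_Suc vec_submodule_Int_fvec[OF W] by blast
  obtain e where e: "e \<in> (\<lambda>v. v k) ` W" and unit: "\<And>x. x \<in> (\<lambda>v. v k) ` W \<Longrightarrow> x - tmult x e \<in> bc_rel alg"
    using semisimple_right_unit[OF ss coord_left_ideal[OF W rel]] by blast
  obtain we where we: "we \<in> W" "we k = e" using e by auto
  have W_vsmult: "vsmult x w \<in> W" if "w \<in> W" for x w using W that unfolding vec_submodule_def by blast
  define rest where "rest v = (v - vsmult (tmult (v k) e) we)(k := 0)" for v
  define q where "q v = vsmult (tmult (v k) e) we + q1 (rest v)" for v
  have rest_vec: "rest v \<in> fvec k" if "v \<in> fvec (Suc k)" for v
    using that we sub unfolding rest_def by (auto simp: fvec_def vsmult_apply)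
  have "q v \<in> W" if v: "v \<in> fvec (Suc k)" for v
    using q1W[OF rest_vec[OF v]] W_vsmult[OF we(1)] W unfolding q_def vec_submodule_def by blast
  moreover have "w - q w \<in> vec_rel alg" if w: "w \<in> W" for w
  proof -
    define u where "u = w - vsmult (tmult (w k) e) we"
    have wk: "w k \<in> (\<lambda>v. v k) ` W" using w by auto
    have uW: "u \<in> W" unfolding u_def using vec_submodule_diff[OF W w W_vsmult[OF we(1)]] .
    have "u k = (w k - tmult (w k) e) + tmult (w k) (e - tmult e e)"
      by (simp add: vsmult_apply u_def we tmult_diff_right tmult_assoc)
    then have uk: "u k \<in> bc_rel alg"
      using unit[OF wk] unit[OF e] bc_rel_left_ideal[OF _ cen] by (simp add: tens_rel.rel_plus)
    define d where "d = (\<lambda>i. if i = k then u k else 0)"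
    have d: "d \<in> W" "d \<in> vec_rel alg" using delta_vec_rel[OF uk] rel unfolding d_def by auto
    have rest_w: "rest w = u - d" unfolding rest_def u_def d_def by (rule ext) simp
    have "rest w \<in> fvec k" using rest_vec sub w by blast
    then have "rest w \<in> W \<inter> fvec k"
      using rest_w vec_submodule_diff[OF W uW d(1)] by simp
    moreover have "w - q w = d + (rest w - q1 (rest w))"
      by (simp add: q_def rest_w u_def)
    ultimately show ?thesis using vec_rel_add[OF d(2) q1rel] by simp
  qed
  moreover have "vec_linear (Suc k) q"
    unfolding vec_linear_def
  proof (intro conjI allI ballI)
    fix v w :: "nat \<Rightarrow> ('a \<times> 'r fract) \<Rightarrow>\<^sub>0 int" assume v: "v \<in> fvec (Suc k)" and w: "w \<in> fvec (Suc k)"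
    have "rest (v + w) = rest v + rest w"
      unfolding rest_def by (rule ext) (simp add: vsmult_apply tmult_add_left)
    then show "q (v + w) = q v + q w"
      using q1lin rest_vec[OF v] rest_vec[OF w] unfolding q_def vec_linear_def
      by (simp add: tmult_add_left vsmult_add_left)
  next
    fix x and v :: "nat \<Rightarrow> ('a \<times> 'r fract) \<Rightarrow>\<^sub>0 int" assume v: "v \<in> fvec (Suc k)"
    have "rest (vsmult x v) = vsmult x (rest v)"
      unfolding rest_def by (rule ext) (simp add: vsmult_apply tmult_diff_right tmult_assoc)
    then show "q (vsmult x v) = vsmult x (q v)"
      using q1lin rest_vec[OF v] unfolding q_def vec_linear_def
      by (simp add: vsmult_apply vsmult_add vsmult_vsmult tmult_assoc)
  qed
  ultimately show ?case by blast
qed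


section \<open>Linear algebra in F^(X)\<close>

definition scl :: "'f::field \<Rightarrow> ('n \<Rightarrow>\<^sub>0 'f) \<Rightarrow> ('n \<Rightarrow>\<^sub>0 'f)" where
  "scl c v = Poly_Mapping.map ((*) c) v"

lemma lookup_scl [simp]: "Poly_Mapping.lookup (scl c v) k = c * Poly_Mapping.lookup v k"
  by (simp add: scl_def map.rep_eq when_def)

lemma scl_add: "scl c (v + w) = scl c v + scl c w"
  by (rule poly_mapping_eqI) (simp add: lookup_add distrib_left)
lemma scl_add_left: "scl (c + d) v = scl c v + scl d v"
  by (rule poly_mapping_eqI) (simp add: lookup_add distrib_right)
lemma scl_scl: "scl c (scl d v) = scl (c * d) v"
  by (rule poly_mapping_eqI) (simp add: mult.assoc)
lemma scl_zero [simp]: "scl c 0 = 0"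
  by (rule poly_mapping_eqI) simp
lemma scl_zero_left [simp]: "scl 0 v = 0"
  by (rule poly_mapping_eqI) simp
lemma scl_one [simp]: "scl 1 v = v"
  by (rule poly_mapping_eqI) simp
lemma scl_minus: "scl c (- v) = - scl c v"
  by (rule poly_mapping_eqI) simp
lemma scl_sum: "scl c (sum f A) = (\<Sum>a\<in>A. scl c (f a))"
  by (induction A rule: infinite_finite_induct) (auto simp: scl_add)

definition lin :: "('n \<Rightarrow> ('m \<Rightarrow>\<^sub>0 'f::field)) \<Rightarrow> ('n \<Rightarrow>\<^sub>0 'f) \<Rightarrow> ('m \<Rightarrow>\<^sub>0 'f)" where
  "lin f v = (\<Sum>b\<in>Poly_Mapping.keys v. scl (Poly_Mapping.lookup v b) (f b))"

lemma lin_expand: "finite X \<Longrightarrow> Poly_Mapping.keys v \<subseteq> X \<Longrightarrow> lin f v = (\<Sum>b\<in>X. scl (Poly_Mapping.lookup v b) (f b))"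
  unfolding lin_def by (rule sum.mono_neutral_left) (auto simp: in_keys_iff)

lemma lin_add: "lin f (v + w) = lin f v + lin f w"
proof -
  let ?X = "Poly_Mapping.keys v \<union> Poly_Mapping.keys w"
  have "Poly_Mapping.keys (v + w) \<subseteq> ?X" by (rule keys_add)
  then show ?thesis
    by (simp add: lin_expand[where X="?X"] lookup_add scl_add_left sum.distrib)
qed

lemma lin_zero [simp]: "lin f 0 = 0" by (simp add: lin_def)

lemma lin_scl: "lin f (scl c v) = scl c (lin f v)"
proof -
  have "Poly_Mapping.keys (scl c v) \<subseteq> Poly_Mapping.keys v" by (auto simp: in_keys_iff)
  then show ?thesis by (simp add: lin_expand[where X="Poly_Mapping.keys v"] scl_sum scl_scl)
qed

lemma lin_addf: "lin (\<lambda>b. f b + g b) v = lin f v + lin g v"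
  by (simp add: lin_def scl_add sum.distrib)

lemma lin_sclf: "lin (\<lambda>b. scl c (f b)) v = scl c (lin f v)"
  by (simp add: lin_def scl_sum scl_scl mult.commute)

lemma lin_cong: "(\<And>b. b \<in> Poly_Mapping.keys v \<Longrightarrow> f b = g b) \<Longrightarrow> lin f v = lin g v"
  by (simp add: lin_def)

lemma lin_comp:
  assumes "\<And>v w. g (v + w) = g v + g w" "\<And>c v. g (scl c v) = scl c (g v)"
  shows "g (lin f v) = lin (\<lambda>b. g (f b)) v"
proof -
  have g0: "g 0 = 0" using assms(1)[of 0 0] by simp
  have gs: "g (sum h A) = (\<Sum>a\<in>A. g (h a))" for h and A :: "'x set"
    by (induction A rule: infinite_finite_induct) (auto simp: g0 assms(1))
  show ?thesis by (simp add: lin_def gs assms(2))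
qed


section \<open>The A-submodule generated by a set\<close>

inductive_set A_span :: "('a \<Rightarrow> 'n::ab_group_add \<Rightarrow> 'n) \<Rightarrow> 'n set \<Rightarrow> 'n set" for na T where
  sp_gen: "t \<in> T \<Longrightarrow> t \<in> A_span na T"
| sp_zero: "0 \<in> A_span na T"
| sp_add: "x \<in> A_span na T \<Longrightarrow> y \<in> A_span na T \<Longrightarrow> x + y \<in> A_span na T"
| sp_act: "x \<in> A_span na T \<Longrightarrow> na a x \<in> A_span na T"

lemma A_span_mono: "x \<in> A_span na T \<Longrightarrow> T \<subseteq> T' \<Longrightarrow> x \<in> A_span na T'"
  by (induction rule: A_span.induct) (auto intro: A_span.intros)


section \<open>A free R-module embedded into F^(B)\<close>

(* Coordinates
   with respect to B give an injective map embed : N \<rightarrow> F^(B); the action of A extends F-linearly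
   to F^(B), turning it into a module over A \<otimes> F that contains N as an A-submodule.  This is where
   the freeness of N2 is used. *)
locale free_rmodule =
  fixes alg :: "'r::idom \<Rightarrow> 'a::ring_1" and na :: "'a \<Rightarrow> 'n::ab_group_add \<Rightarrow> 'n" and B :: "'n set"
  assumes cen: "central_alg alg" and lm: "left_module na"
    and spanB: "\<And>x. \<exists>c. finite {b\<in>B. c b \<noteq> 0} \<and> x = (\<Sum>b\<in>{b\<in>B. c b \<noteq> 0}. na (alg (c b)) b)"
    and indepB: "\<And>c. finite {b\<in>B. c b \<noteq> 0} \<Longrightarrow> (\<Sum>b\<in>{b\<in>B. c b \<noteq> 0}. na (alg (c b)) b) = 0
                   \<Longrightarrow> \<forall>b\<in>B. c b = 0"
begin

lemma alg_add: "alg (r + s) = alg r + alg s" and alg_mult: "alg (r * s) = alg r * alg s"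
  and alg_comm: "alg r * a = a * alg r"
  using cen unfolding central_alg_def by blast+

lemma alg_zero [simp]: "alg 0 = 0" using alg_add[of 0 0] by simp
lemma alg_minus: "alg (- r) = - alg r" using alg_add[of r "- r"] by (simp add: add_eq_0_iff)
lemma alg_diff: "alg (r - s) = alg r - alg s" by (simp only: diff_conv_add_uminus alg_add alg_minus)

lemma na_add: "na a (x + y) = na a x + na a y" and na_add_left: "na (a + b) x = na a x + na b x"
  and na_mult: "na (a * b) x = na a (na b x)" and na_one: "na 1 x = x"
  using lm unfolding left_module_def by blast+

lemma na_zero [simp]: "na a 0 = 0" using na_add[of a 0 0] by simp
lemma na_zero_left [simp]: "na 0 x = 0" using na_add_left[of 0 0 x] by simp
lemma na_minus: "na a (- x) = - na a x" using na_add[of a x "- x"] by (simp add: add_eq_0_iff)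
lemma na_diff: "na a (x - y) = na a x - na a y" by (simp only: diff_conv_add_uminus na_add na_minus)
lemma na_minus_left: "na (- a) x = - na a x" using na_add_left[of a "- a" x] by (simp add: add_eq_0_iff)
lemma na_diff_left: "na (a - b) x = na a x - na b x" by (simp only: diff_conv_add_uminus na_add_left na_minus_left)
lemma na_sum: "na a (sum f A) = (\<Sum>i\<in>A. na a (f i))"
  by (induction A rule: infinite_finite_induct) (auto simp: na_add)
lemma na_alg_comm: "na (alg r) (na a x) = na a (na (alg r) x)"
  by (metis na_mult alg_comm)
lemma na_alg_mult: "na (alg r) (na (alg s) x) = na (alg (r * s)) x"
  by (simp add: na_mult alg_mult)

definition combo :: "('n \<Rightarrow> 'r) \<Rightarrow> 'n set \<Rightarrow> 'n" where
  "combo c S = (\<Sum>b\<in>S. na (alg (c b)) b)"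

definition supp :: "('n \<Rightarrow> 'r) \<Rightarrow> 'n set" where "supp c = {b\<in>B. c b \<noteq> 0}"

lemma combo_supp_superset: "finite S \<Longrightarrow> supp c \<subseteq> S \<Longrightarrow> S \<subseteq> B \<Longrightarrow> combo c (supp c) = combo c S"
  unfolding combo_def supp_def by (rule sum.mono_neutral_left) auto

lemma combo_coeff_unique:
  assumes "finite (supp c)" "finite (supp d)" "combo c (supp c) = combo d (supp d)" "b \<in> B"
  shows "c b = d b"
proof -
  define e where "e b = c b - d b" for b
  let ?S = "supp c \<union> supp d"
  have se: "supp e \<subseteq> ?S" by (auto simp: supp_def e_def)
  have fe: "finite (supp e)" using se assms(1,2) finite_subset by blast
  have SB: "?S \<subseteq> B" by (auto simp: supp_def)
  have "combo e (supp e) = combo e ?S" using se SB assms(1,2) by (intro combo_supp_superset) auto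
  also have "\<dots> = combo c ?S - combo d ?S"
    by (simp add: combo_def e_def alg_diff na_diff_left sum_subtractf)
  also have "\<dots> = 0"
  proof -
    have fS: "finite ?S" using assms(1,2) by simp
    have e1: "combo c (supp c) = combo c ?S" by (rule combo_supp_superset) (use fS SB in auto)
    have e2: "combo d (supp d) = combo d ?S" by (rule combo_supp_superset) (use fS SB in auto)
    show ?thesis using e1 e2 assms(3) by simp
  qed
  finally have z: "combo e (supp e) = 0" .
  have "\<forall>b\<in>B. e b = 0"
    using indepB[of e] fe z unfolding combo_def supp_def by blast
  then show ?thesis using assms(4) by (simp add: e_def)
qed

definition coord :: "'n \<Rightarrow> 'n \<Rightarrow> 'r" where
  "coord x = (SOME c. finite (supp c) \<and> x = combo c (supp c))"

lemma coord_spec: "finite (supp (coord x)) \<and> x = combo (coord x) (supp (coord x))"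
proof -
  have "\<exists>c. finite (supp c) \<and> x = combo c (supp c)"
    using spanB[of x] unfolding supp_def combo_def .
  then show ?thesis unfolding coord_def by (rule someI_ex)
qed

lemma coord_fin: "finite (supp (coord x))" and coord_combo: "combo (coord x) (supp (coord x)) = x"
  using coord_spec[of x] by auto

lemma coord_uniq: "finite (supp c) \<Longrightarrow> combo c (supp c) = x \<Longrightarrow> b \<in> B \<Longrightarrow> coord x b = c b"
  using combo_coeff_unique[of "coord x" c b] coord_fin coord_combo by auto

lemma coord_add: "b \<in> B \<Longrightarrow> coord (x + y) b = coord x b + coord y b"
proof -
  assume b: "b \<in> B"
  define c where "c b = coord x b + coord y b" for b
  let ?S = "supp (coord x) \<union> supp (coord y)"
  have sc: "supp c \<subseteq> ?S" by (auto simp: supp_def c_def)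
  have SB: "?S \<subseteq> B" by (auto simp: supp_def)
  have fS: "finite ?S" using coord_fin by auto
  have "combo c (supp c) = combo c ?S" using combo_supp_superset[OF fS sc SB] .
  also have "\<dots> = combo (coord x) ?S + combo (coord y) ?S"
    by (simp add: combo_def c_def alg_add na_add_left sum.distrib)
  also have "\<dots> = x + y"
    using combo_supp_superset[OF fS _ SB, of "coord x"] combo_supp_superset[OF fS _ SB, of "coord y"] coord_combo by auto
  finally show ?thesis using coord_uniq[of c "x + y" b] b finite_subset[OF sc fS] by (simp add: c_def)
qed

lemma coord_scal: "b \<in> B \<Longrightarrow> coord (na (alg r) x) b = r * coord x b"
proof -
  assume b: "b \<in> B"
  define c where "c b = r * coord x b" for b
  have sc: "supp c \<subseteq> supp (coord x)" by (auto simp: supp_def c_def)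
  have SB: "supp (coord x) \<subseteq> B" by (auto simp: supp_def)
  have "combo c (supp c) = combo c (supp (coord x))" using combo_supp_superset[OF coord_fin sc SB] .
  also have "\<dots> = na (alg r) x"
    by (subst (2) coord_combo[symmetric]) (simp add: combo_def c_def na_sum na_alg_mult)
  finally show ?thesis using coord_uniq[of c _ b] b finite_subset[OF sc coord_fin] by (simp add: c_def)
qed

lemma coord_inj: "(\<And>b. b \<in> B \<Longrightarrow> coord x b = coord y b) \<Longrightarrow> x = y"
proof -
  assume h: "\<And>b. b \<in> B \<Longrightarrow> coord x b = coord y b"
  have "supp (coord x) = supp (coord y)" using h by (auto simp: supp_def)
  moreover have "combo (coord x) (supp (coord x)) = combo (coord y) (supp (coord x))"
    unfolding combo_def by (rule sum.cong) (auto simp: supp_def h)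
  ultimately show ?thesis using coord_combo[of x] coord_combo[of y] by metis
qed

definition embed :: "'n \<Rightarrow> ('n \<Rightarrow>\<^sub>0 'r fract)" where
  "embed x = (\<Sum>b\<in>supp (coord x). Poly_Mapping.single b (Fract (coord x b) 1))"

lemma lookup_embed: "Poly_Mapping.lookup (embed x) b = (if b \<in> B then Fract (coord x b) 1 else 0)"
proof -
  have "Poly_Mapping.lookup (embed x) b = (\<Sum>b'\<in>supp (coord x). (Fract (coord x b') 1 when b' = b))"
    by (simp add: embed_def lookup_sum lookup_single)
  also have "\<dots> = (if b \<in> B then Fract (coord x b) 1 else 0)"
    using coord_fin[of x] by (auto simp: supp_def when_def Zero_fract_def)
  finally show ?thesis .
qed

lemma Fract_1_eq_0: "Fract (a::'r) 1 = 0 \<longleftrightarrow> a = 0"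
  by (simp add: Zero_fract_def eq_fract)

lemma keys_embed: "Poly_Mapping.keys (embed x) = supp (coord x)"
  by (auto simp: in_keys_iff lookup_embed supp_def Fract_1_eq_0 split: if_splits)

lemma embed_add: "embed (x + y) = embed x + embed y"
  by (rule poly_mapping_eqI) (simp add: lookup_add lookup_embed coord_add)

lemma embed_zero [simp]: "embed 0 = 0"
  using embed_add[of 0 0] by simp

lemma embed_minus: "embed (- x) = - embed x"
  by (metis add_eq_0_iff embed_add embed_zero neg_eq_iff_add_eq_0)

lemma embed_sum: "embed (sum f A) = (\<Sum>a\<in>A. embed (f a))"
  by (induction A rule: infinite_finite_induct) (auto simp: embed_add)

lemma embed_scal: "embed (na (alg r) x) = scl (Fract r 1) (embed x)"
  by (rule poly_mapping_eqI) (simp add: lookup_embed coord_scal)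

lemma embed_inj: "embed x = embed y \<Longrightarrow> x = y"
proof -
  assume "embed x = embed y"
  then have "\<And>b. b \<in> B \<Longrightarrow> Fract (coord x b) 1 = Fract (coord y b) 1"
    by (metis lookup_embed)
  then show ?thesis by (intro coord_inj) (simp add: eq_fract)
qed

lemma embed_expansion: "x = (\<Sum>b\<in>Poly_Mapping.keys (embed x). na (alg (coord x b)) b)"
  using coord_combo[of x] by (simp add: keys_embed combo_def)

definition act :: "'a \<Rightarrow> ('n \<Rightarrow>\<^sub>0 'r fract) \<Rightarrow> ('n \<Rightarrow>\<^sub>0 'r fract)" where
  "act a v = lin (\<lambda>b. if b \<in> B then embed (na a b) else 0) v"

lemma act_add: "act a (v + w) = act a v + act a w" by (simp add: act_def lin_add)
lemma act_scl: "act a (scl c v) = scl c (act a v)" by (simp add: act_def lin_scl)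
lemma act_zero [simp]: "act a 0 = 0" by (simp add: act_def)

lemma act_embed: "act a (embed x) = embed (na a x)"
proof -
  have kB: "Poly_Mapping.keys (embed x) \<subseteq> B" by (auto simp: keys_embed supp_def)
  have "act a (embed x) = (\<Sum>b\<in>Poly_Mapping.keys (embed x). scl (Fract (coord x b) 1) (embed (na a b)))"
    unfolding act_def lin_def using kB by (intro sum.cong) (auto simp: lookup_embed)
  also have "\<dots> = (\<Sum>b\<in>Poly_Mapping.keys (embed x). embed (na a (na (alg (coord x b)) b)))"
    by (simp add: embed_scal flip: na_alg_comm)
  also have "\<dots> = embed (na a x)"
    by (subst (2) embed_expansion) (simp add: embed_sum na_sum)
  finally show ?thesis .
qed

lemma act_add_left: "act (a + a') v = act a v + act a' v"
  unfolding act_def by (subst lin_addf[symmetric]) (rule lin_cong, simp add: na_add_left embed_add)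

lemma act_mult: "act a (act a' v) = act (a * a') v"
proof -
  have "act a (act a' v) = lin (\<lambda>b. act a (if b \<in> B then embed (na a' b) else 0)) v"
    unfolding act_def[of a'] by (rule lin_comp) (simp_all add: act_add act_scl)
  also have "\<dots> = act (a * a') v"
    unfolding act_def[of "a * a'"] by (rule lin_cong) (simp add: act_embed na_mult)
  finally show ?thesis .
qed

lemma act_alg: "act (a * alg r) v = scl (Fract r 1) (act a v)"
proof -
  have "act (a * alg r) v = lin (\<lambda>b. scl (Fract r 1) (if b \<in> B then embed (na a b) else 0)) v"
    unfolding act_def by (rule lin_cong) (simp add: embed_scal na_mult flip: na_alg_comm)
  then show ?thesis by (simp add: lin_sclf act_def)
qed

definition act_AF :: "(('a \<times> 'r fract) \<Rightarrow>\<^sub>0 int) \<Rightarrow> ('n \<Rightarrow>\<^sub>0 'r fract) \<Rightarrow> ('n \<Rightarrow>\<^sub>0 'r fract)" where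
  "act_AF x v = (\<Sum>k\<in>Poly_Mapping.keys x. scl (of_int (Poly_Mapping.lookup x k) * snd k) (act (fst k) v))"

lemma act_AF_expand: "finite X \<Longrightarrow> Poly_Mapping.keys x \<subseteq> X \<Longrightarrow>
   act_AF x v = (\<Sum>k\<in>X. scl (of_int (Poly_Mapping.lookup x k) * snd k) (act (fst k) v))"
  unfolding act_AF_def by (rule sum.mono_neutral_left) (auto simp: in_keys_iff)

lemma act_AF_add_x: "act_AF (x + y) v = act_AF x v + act_AF y v"
proof -
  let ?X = "Poly_Mapping.keys x \<union> Poly_Mapping.keys y"
  have "Poly_Mapping.keys (x + y) \<subseteq> ?X" by (rule keys_add)
  then show ?thesis
    by (simp add: act_AF_expand[where X="?X"] lookup_add distrib_right scl_add_left sum.distrib)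
qed

lemma act_AF_zero_x [simp]: "act_AF 0 v = 0" by (simp add: act_AF_def)
lemma act_AF_minus_x: "act_AF (- x) v = - act_AF x v"
  by (metis add_eq_0_iff act_AF_add_x act_AF_zero_x neg_eq_iff_add_eq_0)
lemma act_AF_diff_x: "act_AF (x - y) v = act_AF x v - act_AF y v"
  by (metis diff_conv_add_uminus act_AF_add_x act_AF_minus_x)
lemma act_AF_sum_x: "act_AF (sum f A) v = (\<Sum>a\<in>A. act_AF (f a) v)"
  by (induction A rule: infinite_finite_induct) (auto simp: act_AF_add_x)

lemma act_AF_single: "act_AF (Poly_Mapping.single k c) v = scl (of_int c * snd k) (act (fst k) v)"
  by (simp add: act_AF_expand[where X="{k}"])

lemma act_AF_add_v: "act_AF x (v + w) = act_AF x v + act_AF x w"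
  by (simp add: act_AF_def act_add scl_add sum.distrib)
lemma act_AF_zero_v [simp]: "act_AF x 0 = 0" by (simp add: act_AF_def)
lemma act_AF_sum_v: "act_AF x (sum f A) = (\<Sum>a\<in>A. act_AF x (f a))"
  by (induction A rule: infinite_finite_induct) (auto simp: act_AF_add_v)

lemma act_AF_single_single:
  "act_AF (Poly_Mapping.single k c) (act_AF (Poly_Mapping.single l d) v) = act_AF (tmult (Poly_Mapping.single k c) (Poly_Mapping.single l d)) v"
  by (simp add: tmult_single act_AF_single act_scl scl_scl act_mult ac_simps)

lemma act_AF_tmult: "act_AF (tmult x y) v = act_AF x (act_AF y v)"
proof -
  have "act_AF (tmult x y) v = act_AF (tmult (\<Sum>k\<in>Poly_Mapping.keys x. Poly_Mapping.single k (Poly_Mapping.lookup x k))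
        (\<Sum>l\<in>Poly_Mapping.keys y. Poly_Mapping.single l (Poly_Mapping.lookup y l))) v"
    by (simp flip: poly_mapping_sum_singles)
  also have "\<dots> = act_AF (\<Sum>k\<in>Poly_Mapping.keys x. Poly_Mapping.single k (Poly_Mapping.lookup x k))
        (act_AF (\<Sum>l\<in>Poly_Mapping.keys y. Poly_Mapping.single l (Poly_Mapping.lookup y l)) v)"
    by (simp only: tmult_sum_left tmult_sum_right act_AF_sum_x act_AF_sum_v act_AF_single_single)
  also have "\<dots> = act_AF x (act_AF y v)" by (simp flip: poly_mapping_sum_singles)
  finally show ?thesis .
qed

lemma act_AF_bc_rel: "x \<in> bc_rel alg \<Longrightarrow> act_AF x v = 0"
proof (induction rule: tens_rel.induct)
  case (rel_add_l n p p')
  then show ?case by (simp add: act_AF_diff_x act_AF_single act_add_left scl_add)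
next
  case (rel_add_r n n' p)
  then show ?case by (simp add: act_AF_diff_x act_AF_single distrib_left scl_add_left)
next
  case (rel_bal n p b)
  then show ?case by (simp add: act_AF_diff_x act_AF_single act_alg scl_scl ac_simps)
next
  case rel_zero then show ?case by simp
next
  case (rel_plus x y) then show ?case by (simp add: act_AF_add_x)
next
  case (rel_neg x) then show ?case by (simp add: act_AF_minus_x)
qed

lemma act_AF_A: "act_AF (Poly_Mapping.single (a, 1) 1) v = act a v"
  by (simp add: act_AF_single)

lemma act_AF_one: "act_AF tunit (embed x) = embed x"
  by (simp add: act_AF_A act_embed na_one)

definition saturation :: "'n set \<Rightarrow> ('n \<Rightarrow>\<^sub>0 'r fract) set" where
  "saturation N1 = {v. \<exists>r. r \<noteq> 0 \<and> (\<exists>m\<in>N1. scl (Fract r 1) v = embed m)}"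

context
  fixes N1 assumes sub: "left_submodule na N1"
begin

lemma N1_zero: "0 \<in> N1" and N1_add: "x \<in> N1 \<Longrightarrow> y \<in> N1 \<Longrightarrow> x + y \<in> N1"
  and N1_neg: "x \<in> N1 \<Longrightarrow> - x \<in> N1" and N1_act: "x \<in> N1 \<Longrightarrow> na a x \<in> N1"
  using sub unfolding left_submodule_def by blast+

lemma saturation_zero: "0 \<in> saturation N1"
  unfolding saturation_def using N1_zero embed_zero by (intro CollectI exI[of _ 1]) (metis scl_zero zero_neq_one)

lemma saturation_embed: "m \<in> N1 \<Longrightarrow> embed m \<in> saturation N1"
  unfolding saturation_def by (intro CollectI exI[of _ 1]) (auto simp: One_fract_def[symmetric])

lemma saturation_add: "v \<in> saturation N1 \<Longrightarrow> w \<in> saturation N1 \<Longrightarrow> v + w \<in> saturation N1"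
proof -
  assume "v \<in> saturation N1" "w \<in> saturation N1"
  then obtain r s m n where r: "r \<noteq> 0" "m \<in> N1" "scl (Fract r 1) v = embed m"
    and s: "s \<noteq> 0" "n \<in> N1" "scl (Fract s 1) w = embed n" unfolding saturation_def by blast
  have "scl (Fract (s * r) 1) (v + w) = embed (na (alg s) m + na (alg r) n)"
  proof -
    have "scl (Fract (s * r) 1) (v + w) = scl (Fract s 1) (scl (Fract r 1) v) + scl (Fract r 1) (scl (Fract s 1) w)"
      by (simp add: scl_add scl_scl mult.commute)
    also have "\<dots> = embed (na (alg s) m + na (alg r) n)" using r s by (simp add: embed_add embed_scal)
    finally show ?thesis .
  qed
  moreover have "na (alg s) m + na (alg r) n \<in> N1" using r s N1_add N1_act by blast
  moreover have "s * r \<noteq> 0" using r s by simp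
  ultimately show ?thesis unfolding saturation_def by blast
qed

lemma saturation_neg: "v \<in> saturation N1 \<Longrightarrow> - v \<in> saturation N1"
proof -
  assume "v \<in> saturation N1"
  then obtain r m where r: "r \<noteq> 0" "m \<in> N1" "scl (Fract r 1) v = embed m" unfolding saturation_def by blast
  then have "scl (Fract r 1) (- v) = embed (- m)" by (simp add: scl_minus embed_minus)
  then show ?thesis unfolding saturation_def using r N1_neg by blast
qed

lemma saturation_term: "v \<in> saturation N1 \<Longrightarrow> scl f (act a v) \<in> saturation N1"
proof -
  assume "v \<in> saturation N1"
  then obtain r m where r: "r \<noteq> 0" "m \<in> N1" "scl (Fract r 1) v = embed m" unfolding saturation_def by blast
  obtain p q where f: "f = Fract p q" "q \<noteq> 0" by (cases f) auto
  have "scl (Fract (q * r) 1) (scl f (act a v)) = scl (Fract p 1) (act a (scl (Fract r 1) v))"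
  proof -
    have e: "Fract (q * r * p) q = Fract (p * r) 1" using f by (simp add: eq_fract ac_simps)
    show ?thesis using f by (simp add: scl_scl act_scl e)
  qed
  also have "\<dots> = embed (na (alg p) (na a m))" using r by (simp add: act_embed embed_scal)
  finally show ?thesis unfolding saturation_def using r f N1_act by (intro CollectI exI[of _ "q * r"]) auto
qed

lemma saturation_sum: "(\<And>i. i \<in> A \<Longrightarrow> f i \<in> saturation N1) \<Longrightarrow> sum f A \<in> saturation N1"
  by (induction A rule: infinite_finite_induct) (auto simp: saturation_zero saturation_add)

lemma saturation_act_AF: "v \<in> saturation N1 \<Longrightarrow> act_AF x v \<in> saturation N1"
  unfolding act_AF_def by (rule saturation_sum) (rule saturation_term)

lemma saturation_common: "finite X \<Longrightarrow> X \<subseteq> saturation N1 \<Longrightarrow> \<exists>r. r \<noteq> 0 \<and> (\<forall>v\<in>X. \<exists>m\<in>N1. scl (Fract r 1) v = embed m)"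
proof (induction X rule: finite_induct)
  case empty then show ?case by (intro exI[of _ 1]) auto
next
  case (insert v X)
  then obtain r where r: "r \<noteq> 0" "\<forall>w\<in>X. \<exists>m\<in>N1. scl (Fract r 1) w = embed m" by auto
  obtain s m where s: "s \<noteq> 0" "m \<in> N1" "scl (Fract s 1) v = embed m" using insert(4) unfolding saturation_def by blast
  have "\<forall>w\<in>insert v X. \<exists>m\<in>N1. scl (Fract (s * r) 1) w = embed m"
  proof
    fix w assume "w \<in> insert v X"
    then show "\<exists>m\<in>N1. scl (Fract (s * r) 1) w = embed m"
    proof
      assume "w = v"
      then have "scl (Fract (s * r) 1) w = scl (Fract r 1) (scl (Fract s 1) v)"
        by (simp add: scl_scl mult.commute[of s r])
      then have "scl (Fract (s * r) 1) w = embed (na (alg r) m)"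
        using s by (simp add: embed_scal)
      then show ?thesis using N1_act s by blast
    next
      assume "w \<in> X"
      then obtain m' where "m' \<in> N1" "scl (Fract r 1) w = embed m'" using r by blast
      then have "scl (Fract (s * r) 1) w = embed (na (alg s) m')"
        by (metis embed_scal scl_scl mult_fract mult_1)
      then show ?thesis using N1_act \<open>m' \<in> N1\<close> by blast
    qed
  qed
  then show ?case using r s by (intro exI[of _ "s * r"]) auto
qed

end

(* gen_map ts : (A \<otimes> F)^k \<rightarrow> F^(B), (x_i) \<mapsto> \<Sum> x_i \<cdot> embed (ts ! i), presents the A \<otimes> F-submodule
   generated by ts as a quotient of a free module. *)
definition gen_map :: "'n list \<Rightarrow> (nat \<Rightarrow> ('a \<times> 'r fract) \<Rightarrow>\<^sub>0 int) \<Rightarrow> ('n \<Rightarrow>\<^sub>0 'r fract)" where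
  "gen_map ts v = (\<Sum>i<length ts. act_AF (v i) (embed (ts ! i)))"

lemma gen_map_add: "gen_map ts (v + w) = gen_map ts v + gen_map ts w"
  by (simp add: gen_map_def act_AF_add_x sum.distrib)
lemma gen_map_neg: "gen_map ts (- v) = - gen_map ts v"
  by (simp add: gen_map_def act_AF_minus_x sum_negf)
lemma gen_map_diff: "gen_map ts (v - w) = gen_map ts v - gen_map ts w"
  by (simp add: gen_map_def act_AF_diff_x sum_subtractf)
lemma gen_map_zero: "gen_map ts 0 = 0"
  by (simp add: gen_map_def)
lemma gen_map_vsmult: "gen_map ts (vsmult x v) = act_AF x (gen_map ts v)"
  by (simp add: gen_map_def vsmult_apply act_AF_tmult act_AF_sum_v)
lemma gen_map_vec_rel: "v \<in> vec_rel alg \<Longrightarrow> gen_map ts v = 0"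
  by (simp add: gen_map_def vec_rel_def act_AF_bc_rel)

lemma gen_map_unit:
  assumes "i < length ts"
  shows "gen_map ts (\<lambda>j. if j = i then tunit else 0) = embed (ts ! i)"
proof -
  have "gen_map ts (\<lambda>j. if j = i then tunit else 0)
      = (\<Sum>j<length ts. if j = i then act_AF tunit (embed (ts ! j)) else 0)"
    unfolding gen_map_def by (intro sum.cong) auto
  then show ?thesis using assms by (simp add: act_AF_one)
qed

lemma embed_A_span_in_image:
  "n \<in> A_span na (set ts) \<Longrightarrow> \<exists>v\<in>fvec (length ts). gen_map ts v = embed n"
proof (induction rule: A_span.induct)
  case (sp_gen t)
  then obtain i where "i < length ts" "t = ts ! i" by (auto simp: in_set_conv_nth)
  moreover have "(\<lambda>j. if j = i then tunit else 0) \<in> fvec (length ts)" if "i < length ts"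
    using that by (auto simp: fvec_def)
  ultimately show ?case using gen_map_unit by metis
next
  case sp_zero
  show ?case using fvec_zero gen_map_zero by (metis embed_zero)
next
  case (sp_add x y)
  then show ?case using fvec_add by (metis gen_map_add embed_add)
next
  case (sp_act x a)
  then show ?case using fvec_vsmult by (metis gen_map_vsmult act_AF_A act_embed)
qed

lemma saturation_retraction:
  fixes ts :: "'n list"
  assumes ss: "base_change_semisimple alg" and sub: "left_submodule na N1"
  defines "g \<equiv> gen_map ts" and "k \<equiv> length ts"
  obtains \<pi> where
    "\<And>v. v \<in> fvec k \<Longrightarrow> \<pi> (g v) \<in> saturation N1"
    "\<And>v. v \<in> fvec k \<Longrightarrow> g v \<in> saturation N1 \<Longrightarrow> \<pi> (g v) = g v"
    "\<And>v w. v \<in> fvec k \<Longrightarrow> w \<in> fvec k \<Longrightarrow> \<pi> (g v + g w) = \<pi> (g v) + \<pi> (g w)"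
    "\<And>x v. v \<in> fvec k \<Longrightarrow> \<pi> (act_AF x (g v)) = act_AF x (\<pi> (g v))"
proof -
  define W where "W = {v \<in> fvec k. g v \<in> saturation N1}"
  have "vec_submodule W"
    unfolding vec_submodule_def W_def g_def
    using fvec_add fvec_minus fvec_vsmult gen_map_add gen_map_neg gen_map_vsmult
      saturation_add[OF sub] saturation_neg[OF sub] saturation_act_AF[OF sub] by auto
  moreover have "fvec k \<inter> vec_rel alg \<subseteq> W"
    unfolding W_def g_def using gen_map_vec_rel saturation_zero[OF sub] by auto
  ultimately obtain q where qW: "\<And>v. v \<in> fvec k \<Longrightarrow> q v \<in> W"
    and qrel: "\<And>w. w \<in> W \<Longrightarrow> w - q w \<in> vec_rel alg" and qlin: "vec_linear k q"
    using semisimple_vec_retraction[OF ss cen, of W k] unfolding W_def by blast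
  have qadd: "q (v + w) = q v + q w" if "v \<in> fvec k" "w \<in> fvec k" for v w
    using qlin that unfolding vec_linear_def by blast
  have gq: "g (q w) = g w" if "w \<in> W" for w
    using gen_map_vec_rel[OF qrel[OF that]] by (simp add: g_def gen_map_diff)
  (* \<pi> is well defined on the image of g since q preserves the kernel of g *)
  define \<pi> where "\<pi> m = g (q (SOME v. v \<in> fvec k \<and> g v = m))" for m
  have \<pi>_g: "\<pi> (g v) = g (q v)" if v: "v \<in> fvec k" for v
  proof -
    define v' where "v' = (SOME v'. v' \<in> fvec k \<and> g v' = g v)"
    have v': "v' \<in> fvec k" "g v' = g v"
      unfolding v'_def by (rule someI2[of _ v], use v in auto)+
    have "g (v' - v) = 0" using v' by (simp add: g_def gen_map_diff)
    then have "v' - v \<in> W" unfolding W_def using fvec_diff[OF v'(1) v] saturation_zero[OF sub] by simp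
    then have "g (q (v' - v)) = 0" using gq \<open>g (v' - v) = 0\<close> by simp
    moreover have "q v' = q (v' - v) + q v" using qadd[OF fvec_diff[OF v'(1) v] v] by simp
    ultimately show ?thesis unfolding \<pi>_def v'_def[symmetric] by (simp add: g_def gen_map_add)
  qed
  show ?thesis
  proof
    show "\<pi> (g v) \<in> saturation N1" if "v \<in> fvec k" for v
      using \<pi>_g[OF that] qW[OF that] W_def by auto
    show "\<pi> (g v) = g v" if "v \<in> fvec k" "g v \<in> saturation N1" for v
      using \<pi>_g[OF that(1)] gq[of v] that W_def by auto
    show "\<pi> (g v + g w) = \<pi> (g v) + \<pi> (g w)" if "v \<in> fvec k" "w \<in> fvec k" for v w
      using \<pi>_g[OF fvec_add[OF that]] \<pi>_g[OF that(1)] \<pi>_g[OF that(2)] qadd[OF that]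
      by (simp add: g_def gen_map_add)
    show "\<pi> (act_AF x (g v)) = act_AF x (\<pi> (g v))" if "v \<in> fvec k" for x v
      using \<pi>_g[OF fvec_vsmult[OF that]] \<pi>_g[OF that] qlin that unfolding vec_linear_def
      by (simp add: g_def gen_map_vsmult)
  qed
qed

lemma clear_denominators:
  assumes sub: "left_submodule na N1" and T: "finite T"
    and add: "\<And>x y. x \<in> A_span na T \<Longrightarrow> y \<in> A_span na T \<Longrightarrow> \<psi> (x + y) = \<psi> x + \<psi> y"
    and lin: "\<And>a x. x \<in> A_span na T \<Longrightarrow> \<psi> (na a x) = act a (\<psi> x)"
    and gen: "\<And>t. t \<in> T \<Longrightarrow> \<psi> t \<in> saturation N1"
  obtains r where "r \<noteq> 0" "\<And>n. n \<in> A_span na T \<Longrightarrow> \<exists>m\<in>N1. scl (Fract r 1) (\<psi> n) = embed m"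
proof -
  obtain r where r: "r \<noteq> 0" and rT: "\<forall>v\<in>\<psi> ` T. \<exists>m\<in>N1. scl (Fract r 1) v = embed m"
    using saturation_common[OF sub, of "\<psi> ` T"] T gen by blast
  have "\<exists>m\<in>N1. scl (Fract r 1) (\<psi> n) = embed m" if "n \<in> A_span na T" for n
    using that
  proof (induction rule: A_span.induct)
    case (sp_gen t)
    then show ?case using rT by blast
  next
    case sp_zero
    have "\<psi> 0 = 0" using add[OF A_span.sp_zero A_span.sp_zero] by simp
    then show ?case using N1_zero[OF sub] by (metis embed_zero scl_zero)
  next
    case (sp_add x y)
    then obtain m m' where "m \<in> N1" "scl (Fract r 1) (\<psi> x) = embed m"
      "m' \<in> N1" "scl (Fract r 1) (\<psi> y) = embed m'" by blast
    then show ?case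
      using add[OF sp_add.hyps] N1_add[OF sub] by (metis embed_add scl_add)
  next
    case (sp_act x a)
    then obtain m where "m \<in> N1" "scl (Fract r 1) (\<psi> x) = embed m" by blast
    then show ?case
      using lin[OF sp_act.hyps] N1_act[OF sub] by (metis act_embed act_scl)
  qed
  with r that show ?thesis by blast
qed

lemma scaled_retraction:
  assumes ss: "base_change_semisimple alg" and sub: "left_submodule na N1"
  obtains r \<phi> where "r \<noteq> 0" "\<And>n. n \<in> A_span na (set ts) \<Longrightarrow> \<phi> n \<in> N1"
    "\<And>n n'. n \<in> A_span na (set ts) \<Longrightarrow> n' \<in> A_span na (set ts) \<Longrightarrow> \<phi> (n + n') = \<phi> n + \<phi> n'"
    "\<And>a n. n \<in> A_span na (set ts) \<Longrightarrow> \<phi> (na a n) = na a (\<phi> n)"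
    "\<And>n. n \<in> N1 \<inter> A_span na (set ts) \<Longrightarrow> \<phi> n = na (alg r) n"
proof -
  let ?S = "A_span na (set ts)"
  obtain \<pi> where \<pi>_sat: "\<And>v. v \<in> fvec (length ts) \<Longrightarrow> \<pi> (gen_map ts v) \<in> saturation N1"
    and \<pi>_fix: "\<And>v. v \<in> fvec (length ts) \<Longrightarrow> gen_map ts v \<in> saturation N1 \<Longrightarrow> \<pi> (gen_map ts v) = gen_map ts v"
    and \<pi>_add: "\<And>v w. v \<in> fvec (length ts) \<Longrightarrow> w \<in> fvec (length ts)
                 \<Longrightarrow> \<pi> (gen_map ts v + gen_map ts w) = \<pi> (gen_map ts v) + \<pi> (gen_map ts w)"
    and \<pi>_lin: "\<And>x v. v \<in> fvec (length ts) \<Longrightarrow> \<pi> (act_AF x (gen_map ts v)) = act_AF x (\<pi> (gen_map ts v))"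
    using saturation_retraction[OF ss sub] by blast
  define \<psi> where "\<psi> n = \<pi> (embed n)" for n
  have \<psi>_add: "\<psi> (x + y) = \<psi> x + \<psi> y" if "x \<in> ?S" "y \<in> ?S" for x y
    using embed_A_span_in_image[OF that(1)] embed_A_span_in_image[OF that(2)] \<pi>_add
    unfolding \<psi>_def by (metis embed_add)
  have \<psi>_lin: "\<psi> (na a x) = act a (\<psi> x)" if "x \<in> ?S" for a x
    using embed_A_span_in_image[OF that] \<pi>_lin[of _ "Poly_Mapping.single (a, 1) 1"]
    unfolding \<psi>_def by (metis act_AF_A act_embed)
  have "\<psi> t \<in> saturation N1" if "t \<in> set ts" for t
    using embed_A_span_in_image[OF A_span.sp_gen[OF that]] \<pi>_sat unfolding \<psi>_def by metis
  then obtain r where r: "r \<noteq> 0" and rS: "\<And>n. n \<in> ?S \<Longrightarrow> \<exists>m\<in>N1. scl (Fract r 1) (\<psi> n) = embed m"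
    using clear_denominators[OF sub finite_set \<psi>_add \<psi>_lin] by blast
  define \<phi> where "\<phi> n = (SOME m. m \<in> N1 \<and> scl (Fract r 1) (\<psi> n) = embed m)" for n
  have \<phi>: "\<phi> n \<in> N1" "embed (\<phi> n) = scl (Fract r 1) (\<psi> n)" if "n \<in> ?S" for n
    using someI_ex[OF rS[OF that, unfolded Bex_def]] unfolding \<phi>_def by auto
  show ?thesis
  proof
    show "\<phi> (n + n') = \<phi> n + \<phi> n'" if "n \<in> ?S" "n' \<in> ?S" for n n'
      using \<phi>(2)[OF A_span.sp_add[OF that]] \<phi>(2)[OF that(1)] \<phi>(2)[OF that(2)] \<psi>_add[OF that]
      by (intro embed_inj) (simp add: embed_add scl_add)
    show "\<phi> (na a n) = na a (\<phi> n)" if "n \<in> ?S" for a n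
    proof (rule embed_inj)
      have "embed (\<phi> (na a n)) = scl (Fract r 1) (act a (\<psi> n))"
        using \<phi>(2)[OF A_span.sp_act[OF that]] \<psi>_lin[OF that] by simp
      also have "\<dots> = embed (na a (\<phi> n))"
        using \<phi>(2)[OF that] by (simp add: act_scl flip: act_embed)
      finally show "embed (\<phi> (na a n)) = embed (na a (\<phi> n))" .
    qed
    show "\<phi> n = na (alg r) n" if n: "n \<in> N1 \<inter> ?S" for n
    proof -
      obtain v where v: "v \<in> fvec (length ts)" "gen_map ts v = embed n"
        using embed_A_span_in_image n by blast
      have "\<psi> n = embed n" using \<pi>_fix[OF v(1)] v(2) saturation_embed[OF sub] n unfolding \<psi>_def by auto
      then show ?thesis using \<phi>(2) n by (intro embed_inj) (simp add: embed_scal)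
    qed
  qed (use r \<phi>(1) in auto)
qed

end


section \<open>Relations over N2 supported on N1 are relations over N1\<close>

lemma tens_rel_finite_support:
  "x \<in> tens_rel pa na UNIV \<Longrightarrow> \<exists>T. finite T \<and> x \<in> tens_rel pa na (A_span na T)"
proof (induction rule: tens_rel.induct)
  case (rel_add_l n p p')
  then show ?case by (intro exI[of _ "{n}"]) (auto intro: tens_rel.intros A_span.intros)
next
  case (rel_add_r n n' p)
  then show ?case by (intro exI[of _ "{n, n'}"]) (auto intro!: tens_rel.intros A_span.intros)
next
  case (rel_bal n p b)
  then show ?case by (intro exI[of _ "{n}"]) (auto intro: tens_rel.intros A_span.intros)
next
  case rel_zero
  then show ?case by (auto intro: tens_rel.intros)
next
  case (rel_plus x y)
  then obtain T T' where "finite T" "x \<in> tens_rel pa na (A_span na T)"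
    and "finite T'" "y \<in> tens_rel pa na (A_span na T')" by blast
  then have "x \<in> tens_rel pa na (A_span na (T \<union> T'))" "y \<in> tens_rel pa na (A_span na (T \<union> T'))"
    by (meson Un_upper1 Un_upper2 A_span_mono subsetI tens_rel_mono)+
  then show ?case using \<open>finite T\<close> \<open>finite T'\<close> by (intro exI[of _ "T \<union> T'"]) (auto intro: tens_rel.intros)
next
  case (rel_neg x)
  then show ?case by (auto intro: tens_rel.intros)
qed

lemma tens_rel_pushfwd:
  assumes "x \<in> tens_rel pa na N" and "\<And>n. n \<in> N \<Longrightarrow> \<phi> n \<in> N1"
    and "\<And>n n'. n \<in> N \<Longrightarrow> n' \<in> N \<Longrightarrow> \<phi> (n + n') = \<phi> n + \<phi> n'"
    and "\<And>a n. n \<in> N \<Longrightarrow> \<phi> (na a n) = na a (\<phi> n)"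
  shows "pushfwd (\<lambda>k. (fst k, \<phi> (snd k))) x \<in> tens_rel pa na N1"
  using assms(1)
proof (induction rule: tens_rel.induct)
  case (rel_add_l n p p')
  then show ?case using assms(2) by (simp add: pushfwd_diff pushfwd_single tens_rel.rel_add_l)
next
  case (rel_add_r n n' p)
  then show ?case using assms(2,3) by (simp add: pushfwd_diff pushfwd_single tens_rel.rel_add_r)
next
  case (rel_bal n p b)
  then show ?case using assms(2,4) by (simp add: pushfwd_diff pushfwd_single tens_rel.rel_bal)
next
  case rel_zero
  then show ?case by (simp add: tens_rel.rel_zero)
next
  case (rel_plus x y)
  then show ?case by (simp add: pushfwd_add tens_rel.rel_plus)
next
  case (rel_neg x)
  then show ?case by (simp add: pushfwd_minus tens_rel.rel_neg)
qed

lemma free_quot_free_rmodule: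
  assumes cen: "central_alg alg" and lm: "left_module na"
    and free: "free_quot (\<lambda>r x. na (alg r) x) UNIV {0}"
  obtains B where "free_rmodule alg na B"
proof -
  obtain B where
    span: "\<forall>x\<in>UNIV. \<exists>c. finite {b\<in>B. c b \<noteq> 0} \<and> x - (\<Sum>b\<in>{b\<in>B. c b \<noteq> 0}. na (alg (c b)) b) \<in> {0}"
    and indep: "\<forall>c. finite {b\<in>B. c b \<noteq> 0} \<longrightarrow> (\<Sum>b\<in>{b\<in>B. c b \<noteq> 0}. na (alg (c b)) b) \<in> {0}
                  \<longrightarrow> (\<forall>b\<in>B. c b = 0)"
    using free unfolding free_quot_def by blast
  have "free_rmodule alg na B"
  proof
    show "\<exists>c. finite {b\<in>B. c b \<noteq> 0} \<and> x = (\<Sum>b\<in>{b\<in>B. c b \<noteq> 0}. na (alg (c b)) b)" for x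
    proof -
      obtain c where "finite {b\<in>B. c b \<noteq> 0}" "x - (\<Sum>b\<in>{b\<in>B. c b \<noteq> 0}. na (alg (c b)) b) \<in> {0}"
        using span by blast
      then show ?thesis by (intro exI[of _ c]) simp
    qed
    show "\<forall>b\<in>B. c b = 0"
      if "finite {b\<in>B. c b \<noteq> 0}" "(\<Sum>b\<in>{b\<in>B. c b \<noteq> 0}. na (alg (c b)) b) = 0" for c
      using indep[rule_format, OF that(1)] that(2) by simp
  qed (fact cen lm)+
  then show ?thesis by (rule that)
qed

lemma relation_restriction:
  fixes alg :: "'r::idom \<Rightarrow> 'a::ring_1" and pa :: "'p::ab_group_add \<Rightarrow> 'a \<Rightarrow> 'p"
    and na :: "'a \<Rightarrow> 'n::ab_group_add \<Rightarrow> 'n" and N1 :: "'n set"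
  assumes cen: "central_alg alg" and rm: "right_module pa" and lm: "left_module na"
    and sub: "left_submodule na N1" and ss: "base_change_semisimple alg"
    and free2: "free_quot (\<lambda>r x. na (alg r) x) UNIV {0}"
    and free1: "free_quot (\<lambda>r x. scal_l pa (alg r) x) (tens_sums N1) (tens_rel pa na N1)"
    and z: "z \<in> tens_sums N1" and z2: "z \<in> tens_rel pa na UNIV"
  shows "z \<in> tens_rel pa na N1"
proof -
  obtain B where "free_rmodule alg na B" using free_quot_free_rmodule[OF cen lm free2] .
  then interpret free_rmodule alg na B .
  obtain T where T: "finite T" "z \<in> tens_rel pa na (A_span na T)"
    using tens_rel_finite_support[OF z2] by blast
  obtain ts where ts: "set ts = T \<union> snd ` Poly_Mapping.keys z"
    using finite_list[of "T \<union> snd ` Poly_Mapping.keys z"] T(1) by auto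
  have z_ts: "z \<in> tens_rel pa na (A_span na (set ts))"
    using T(2) by (rule tens_rel_mono) (auto intro: A_span_mono simp: ts)
  obtain r \<phi> where r: "r \<noteq> 0" and \<phi>: "\<And>n. n \<in> A_span na (set ts) \<Longrightarrow> \<phi> n \<in> N1"
    "\<And>n n'. n \<in> A_span na (set ts) \<Longrightarrow> n' \<in> A_span na (set ts) \<Longrightarrow> \<phi> (n + n') = \<phi> n + \<phi> n'"
    "\<And>a n. n \<in> A_span na (set ts) \<Longrightarrow> \<phi> (na a n) = na a (\<phi> n)"
    and \<phi>_r: "\<And>n. n \<in> N1 \<inter> A_span na (set ts) \<Longrightarrow> \<phi> n = na (alg r) n"
    using scaled_retraction[OF ss sub, where ts=ts] by blast
  have "snd k \<in> N1 \<inter> A_span na (set ts)" if "k \<in> Poly_Mapping.keys z" for k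
    using z that unfolding tens_sums_def by (auto simp: ts intro: A_span.sp_gen)
  then have "pushfwd (\<lambda>k. (fst k, na (alg r) (snd k))) z = pushfwd (\<lambda>k. (fst k, \<phi> (snd k))) z"
    using \<phi>_r by (intro pushfwd_cong) auto
  also have "\<dots> \<in> tens_rel pa na N1"
    by (rule tens_rel_pushfwd[where \<phi>=\<phi>, OF z_ts \<phi>(1)]) (use \<phi>(2,3) in auto)
  finally have "pushfwd (\<lambda>k. (fst k, na (alg r) (snd k))) z \<in> tens_rel pa na N1" .
  from tens_rel.rel_plus[OF scal_l_balanced[OF z, where alg=alg and r=r] this]
  have "scal_l pa (alg r) z \<in> tens_rel pa na N1" by simp
  then show ?thesis using tensor_torsion_free[OF free1 rm cen r z] by blast
qed

theorem mainTheorem6: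
  fixes alg :: "'r::idom \<Rightarrow> 'a::ring_1"
    and pa :: "'p::ab_group_add \<Rightarrow> 'a \<Rightarrow> 'p"
    and na :: "'a \<Rightarrow> 'n::ab_group_add \<Rightarrow> 'n"
    and N1 :: "'n set"
  assumes "central_alg alg"
    and "right_module pa"
    and "left_module na"
    and "left_submodule na N1"
    and "base_change_semisimple alg"
    and "free_quot (\<lambda>r x. na (alg r) x) UNIV {0}"
    and "free_quot (\<lambda>r x. scal_l pa (alg r) x) (tens_sums N1) (tens_rel pa na N1)"
  shows "inj_on (tensor_incl pa na UNIV) (tensor pa na N1)"
proof (rule inj_on_tensor_incl)
  show "z \<in> tens_rel pa na N1" if "z \<in> tens_sums N1" "z \<in> tens_rel pa na UNIV" for z
    using relation_restriction[OF assms that] .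
qed simp

end
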